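(* Let $\mathcal{P}=(\mathcal{P},m,\Delta,\delta)$ be a double twisted bialgebra and $\mathcal{Q}$ a species. The formula $\phi\leftarrow f=(\phi\otimes f)\circ\delta$ (i.e. $(\phi\leftarrow f)[A](x)=\sum f[A](x'')\phi[A](x')$ where $\delta_A(x)=\sum x'\otimes x''$) defines a right action of the monoid $M_{\mathcal{P}}=(\mathrm{Char}(\mathcal{P}),\star)$ on the set $\mathrm{Mor}(\mathcal{P},\mathcal{Q})$ of species morphisms $\mathcal{P}\to\mathcal{Q}$; in particular $(\phi\leftarrow f)\leftarrow g=\phi\leftarrow(f\star g)$. Moreover: (1) if $\mathcal{Q}$ is a twisted algebra, the set $\mathrm{Mor}_A(\mathcal{P},\mathcal{Q})$ of twisted algebra morphisms is stable under this action; (2) if $\mathcal{Q}$ is a twisted coalgebra, the set $\mathrm{Mor}_C(\mathcal{P},\mathcal{Q})$ of twisted coalgebra morphisms is stable under this action; (3) if $\mathcal{Q}$ is a twisted bialgebra, the set $\mathrm{Mor}_B(\mathcal{P},\mathcal{Q})$ of twisted bialgebra morphisms is stable under this action.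
   Context: Work over a field $\mathbb{K}$. Species, twisted algebras (natural associative $m_{A,B}:\mathcal{P}[A]\otimes\mathcal{P}[B]\to\mathcal{P}[A\sqcup B]$ with unit $1_{\mathcal{P}}$), twisted coalgebras (natural coassociative $\Delta_{A,B}:\mathcal{P}[A\sqcup B]\to\mathcal{P}[A]\otimes\mathcal{P}[B]$ with counit $\varepsilon$) and twisted bialgebras are taken in the category of species with the Cauchy product; morphisms are natural families of linear maps compatible with the structures. A double twisted bialgebra is $(\mathcal{P},m,\Delta,\delta)$ with: (i) $(\mathcal{P},m,\Delta)$ a twisted bialgebra with counit $\varepsilon$; (ii) for each finite set $A$ a coassociative coproduct $\delta_A:\mathcal{P}[A]\to\mathcal{P}[A]\otimes\mathcal{P}[A]$ with counit $\varepsilon'_A$, natural in bijections; (iii) $\delta$ multiplicative ($\delta(xy)=\sum x'y'\otimes x''y''$, $\delta_\emptyset(1)=1\otimes1$); (iv) $(\Delta_{A,B}\otimes Id)\circ\delta_{A\sqcup B}=m_{1,3,24}\circ(\delta_A\otimes\delta_B)\circ\Delta_{A,B}$ with $m_{1,3,24}(x\otimes y\otimes z\otimes t)=x\otimes z\otimes m_{A,B}(y\otimes t)$; (v) $(\varepsilon\otimes Id)\delta_\emptyset(x)=\varepsilon(x)1_{\mathcal{P}}$ for $x\in\mathcal{P}[\emptyset]$. $\mathrm{Char}(\mathcal{P})$ is the set of characters: natural families of linear forms $f[A]:\mathcal{P}[A]\to\mathbb{K}$ with $f(xy)=f(x)f(y)$ and $f(1_{\mathcal{P}})=1$. The product $\star$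 is $(f\star g)(x)=\sum f(x')g(x'')$ where $\delta_A(x)=\sum x'\otimes x''$; $(\mathrm{Char}(\mathcal{P}),\star)$ is a monoid with unit $\varepsilon'$. *)

theory Defs
  imports Complex_Main
begin

text \<open>A species is given by an ambient K-vector space (type 'p with scalar
multiplication scl), a subspace sp A for every finite set A of labels
(this is P[A]), and relabelling maps rl s A : P[A] -> P[s`A] for every
s injective on A (this is P[s] for the bijection s : A -> s`A).\<close>

record ('k, 'l, 'p) spec =
  scl :: "'k \<Rightarrow> 'p \<Rightarrow> 'p"
  sp  :: "'l set \<Rightarrow> 'p set"
  rl  :: "('l \<Rightarrow> 'l) \<Rightarrow> 'l set \<Rightarrow> 'p \<Rightarrow> 'p"

definition lin_map :: "('k \<Rightarrow> 'p::ab_group_add \<Rightarrow> 'p) \<Rightarrow> 'p set \<Rightarrow> ('k \<Rightarrow> 'q::ab_group_add \<Rightarrow> 'q) \<Rightarrow> ('p \<Rightarrow> 'q) \<Rightarrow> bool"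
  where "lin_map s1 V s2 f \<longleftrightarrow>
    (\<forall>x\<in>V. \<forall>y\<in>V. f (x + y) = f x + f y) \<and> (\<forall>c. \<forall>x\<in>V. f (s1 c x) = s2 c (f x))"

definition lin_form :: "('k::field \<Rightarrow> 'p::ab_group_add \<Rightarrow> 'p) \<Rightarrow> 'p set \<Rightarrow> ('p \<Rightarrow> 'k) \<Rightarrow> bool"
  where "lin_form s V f \<longleftrightarrow>
    (\<forall>x\<in>V. \<forall>y\<in>V. f (x + y) = f x + f y) \<and> (\<forall>c. \<forall>x\<in>V. f (s c x) = c * f x)"

definition species :: "('k::field, 'l, 'p::ab_group_add) spec \<Rightarrow> bool" where
  "species P \<longleftrightarrow> vector_space (scl P) \<and>
    (\<forall>A. finite A \<longrightarrow> module.subspace (scl P) (sp P A)) \<and>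
    (\<forall>A s. finite A \<and> inj_on s A \<longrightarrow>
        (\<forall>x\<in>sp P A. rl P s A x \<in> sp P (s ` A)) \<and> lin_map (scl P) (sp P A) (scl P) (rl P s A)) \<and>
    (\<forall>A. \<forall>x\<in>sp P A. finite A \<longrightarrow> rl P id A x = x) \<and>
    (\<forall>A s t. \<forall>x\<in>sp P A. finite A \<and> inj_on s A \<and> inj_on t (s ` A) \<longrightarrow>
        rl P (t \<circ> s) A x = rl P t (s ` A) (rl P s A x)) \<and>
    (\<forall>A s s'. \<forall>x\<in>sp P A. finite A \<and> (\<forall>a\<in>A. s a = s' a) \<longrightarrow> rl P s A x = rl P s' A x)"

text \<open>An element of V (x) W (resp. U (x) V (x) W) is represented by a finite
formal sum of pure tensors, i.e. a list of pairs (triples). Two such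
representatives denote the same tensor iff all their entries lie in the
respective spaces and they agree under every functional
lambda (x) mu (resp. lambda (x) mu (x) nu), lambda, mu, nu linear forms; over a
field this is exactly equality in the tensor product.\<close>

definition tens_eq :: "('k::field \<Rightarrow> 'p::ab_group_add \<Rightarrow> 'p) \<Rightarrow> 'p set \<Rightarrow> 'p set
     \<Rightarrow> ('p \<times> 'p) list \<Rightarrow> ('p \<times> 'p) list \<Rightarrow> bool" where
  "tens_eq s V W t u \<longleftrightarrow> set t \<subseteq> V \<times> W \<and> set u \<subseteq> V \<times> W \<and>
    (\<forall>l m. lin_form s V l \<and> lin_form s W m \<longrightarrow>
       (\<Sum>(a,b)\<leftarrow>t. l a * m b) = (\<Sum>(a,b)\<leftarrow>u. l a * m b))"

definition tens3_eq :: "('k::field \<Rightarrow> 'p::ab_group_add \<Rightarrow> 'p) \<Rightarrow> 'p set \<Rightarrow> 'p set \<Rightarrow> 'p set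
     \<Rightarrow> ('p \<times> 'p \<times> 'p) list \<Rightarrow> ('p \<times> 'p \<times> 'p) list \<Rightarrow> bool" where
  "tens3_eq s U V W t u \<longleftrightarrow> set t \<subseteq> U \<times> V \<times> W \<and> set u \<subseteq> U \<times> V \<times> W \<and>
    (\<forall>k l m. lin_form s U k \<and> lin_form s V l \<and> lin_form s W m \<longrightarrow>
       (\<Sum>(a,b,c)\<leftarrow>t. k a * l b * m c) = (\<Sum>(a,b,c)\<leftarrow>u. k a * l b * m c))"

text \<open>Product m A B : P[A] (x) P[B] -> P[A \<union> B] (A, B disjoint), given as a
bilinear map; unit u \<in> P[{}].\<close>

definition twisted_algebra :: "('k::field, 'l, 'p::ab_group_add) spec
    \<Rightarrow> ('l set \<Rightarrow> 'l set \<Rightarrow> 'p \<Rightarrow> 'p \<Rightarrow> 'p) \<Rightarrow> 'p \<Rightarrow> bool" where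
  "twisted_algebra P m u \<longleftrightarrow> species P \<and>
    (\<forall>A B. finite A \<and> finite B \<and> A \<inter> B = {} \<longrightarrow>
       (\<forall>x\<in>sp P A. \<forall>y\<in>sp P B. m A B x y \<in> sp P (A \<union> B)) \<and>
       (\<forall>y\<in>sp P B. lin_map (scl P) (sp P A) (scl P) (\<lambda>x. m A B x y)) \<and>
       (\<forall>x\<in>sp P A. lin_map (scl P) (sp P B) (scl P) (\<lambda>y. m A B x y)) \<and>
       (\<forall>s. \<forall>x\<in>sp P A. \<forall>y\<in>sp P B. inj_on s (A \<union> B) \<longrightarrow>
          m (s ` A) (s ` B) (rl P s A x) (rl P s B y) = rl P s (A \<union> B) (m A B x y))) \<and>
    (\<forall>A B C. finite A \<and> finite B \<and> finite C \<and> A \<inter> B = {} \<and> A \<inter> C = {} \<and> B \<inter> C = {} \<longrightarrow>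
       (\<forall>x\<in>sp P A. \<forall>y\<in>sp P B. \<forall>z\<in>sp P C.
          m (A \<union> B) C (m A B x y) z = m A (B \<union> C) x (m B C y z))) \<and>
    u \<in> sp P {} \<and>
    (\<forall>A. \<forall>x\<in>sp P A. finite A \<longrightarrow> m {} A u x = x \<and> m A {} x u = x)"

definition twisted_coalgebra :: "('k::field, 'l, 'p::ab_group_add) spec
    \<Rightarrow> ('l set \<Rightarrow> 'l set \<Rightarrow> 'p \<Rightarrow> ('p \<times> 'p) list) \<Rightarrow> ('p \<Rightarrow> 'k) \<Rightarrow> bool" where
  "twisted_coalgebra P D e \<longleftrightarrow> species P \<and>
    (\<forall>A B. finite A \<and> finite B \<and> A \<inter> B = {} \<longrightarrow>
       (\<forall>x\<in>sp P (A \<union> B). set (D A B x) \<subseteq> sp P A \<times> sp P B) \<and>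
       (\<forall>x\<in>sp P (A \<union> B). \<forall>y\<in>sp P (A \<union> B).
          tens_eq (scl P) (sp P A) (sp P B) (D A B (x + y)) (D A B x @ D A B y)) \<and>
       (\<forall>c. \<forall>x\<in>sp P (A \<union> B).
          tens_eq (scl P) (sp P A) (sp P B) (D A B (scl P c x))
            (map (\<lambda>(a,b). (scl P c a, b)) (D A B x))) \<and>
       (\<forall>s. \<forall>x\<in>sp P (A \<union> B). inj_on s (A \<union> B) \<longrightarrow>
          tens_eq (scl P) (sp P (s ` A)) (sp P (s ` B)) (D (s ` A) (s ` B) (rl P s (A \<union> B) x))
            (map (\<lambda>(a,b). (rl P s A a, rl P s B b)) (D A B x))) \<and>
       (\<forall>x\<in>sp P A. (\<Sum>(a,b)\<leftarrow>D {} A x. scl P (e a) b) = x) \<and>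
       (\<forall>x\<in>sp P A. (\<Sum>(a,b)\<leftarrow>D A {} x. scl P (e b) a) = x)) \<and>
    (\<forall>A B C. finite A \<and> finite B \<and> finite C \<and> A \<inter> B = {} \<and> A \<inter> C = {} \<and> B \<inter> C = {} \<longrightarrow>
       (\<forall>x\<in>sp P (A \<union> B \<union> C).
          tens3_eq (scl P) (sp P A) (sp P B) (sp P C)
            [(a, b, c). (v, c) \<leftarrow> D (A \<union> B) C x, (a, b) \<leftarrow> D A B v]
            [(a, b, c). (a, v) \<leftarrow> D A (B \<union> C) x, (b, c) \<leftarrow> D B C v])) \<and>
    lin_form (scl P) (sp P {}) e"

definition twisted_bialgebra :: "('k::field, 'l, 'p::ab_group_add) spec
    \<Rightarrow> ('l set \<Rightarrow> 'l set \<Rightarrow> 'p \<Rightarrow> 'p \<Rightarrow> 'p) \<Rightarrow> 'p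
    \<Rightarrow> ('l set \<Rightarrow> 'l set \<Rightarrow> 'p \<Rightarrow> ('p \<times> 'p) list) \<Rightarrow> ('p \<Rightarrow> 'k) \<Rightarrow> bool" where
  "twisted_bialgebra P m u D e \<longleftrightarrow> twisted_algebra P m u \<and> twisted_coalgebra P D e \<and>
    (\<forall>A B C E. finite A \<and> finite B \<and> finite C \<and> finite E \<and> A \<inter> B = {} \<and> C \<inter> E = {}
        \<and> A \<union> B = C \<union> E \<longrightarrow>
       (\<forall>x\<in>sp P C. \<forall>y\<in>sp P E.
          tens_eq (scl P) (sp P A) (sp P B) (D A B (m C E x y))
            [(m (A \<inter> C) (A \<inter> E) x1 y1, m (B \<inter> C) (B \<inter> E) x2 y2).
               (x1, x2) \<leftarrow> D (A \<inter> C) (B \<inter> C) x, (y1, y2) \<leftarrow> D (A \<inter> E) (B \<inter> E) y])) \<and>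
    tens_eq (scl P) (sp P {}) (sp P {}) (D {} {} u) [(u, u)] \<and>
    (\<forall>x\<in>sp P {}. \<forall>y\<in>sp P {}. e (m {} {} x y) = e x * e y) \<and>
    e u = 1"

definition double_twisted_bialgebra :: "('k::field, 'l, 'p::ab_group_add) spec
    \<Rightarrow> ('l set \<Rightarrow> 'l set \<Rightarrow> 'p \<Rightarrow> 'p \<Rightarrow> 'p) \<Rightarrow> 'p
    \<Rightarrow> ('l set \<Rightarrow> 'l set \<Rightarrow> 'p \<Rightarrow> ('p \<times> 'p) list) \<Rightarrow> ('p \<Rightarrow> 'k)
    \<Rightarrow> ('l set \<Rightarrow> 'p \<Rightarrow> ('p \<times> 'p) list) \<Rightarrow> ('l set \<Rightarrow> 'p \<Rightarrow> 'k) \<Rightarrow> bool" where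
  "double_twisted_bialgebra P m u D e d e' \<longleftrightarrow> twisted_bialgebra P m u D e \<and>
    (\<forall>A. finite A \<longrightarrow>
       (\<forall>x\<in>sp P A. set (d A x) \<subseteq> sp P A \<times> sp P A) \<and>
       (\<forall>x\<in>sp P A. \<forall>y\<in>sp P A. tens_eq (scl P) (sp P A) (sp P A) (d A (x + y)) (d A x @ d A y)) \<and>
       (\<forall>c. \<forall>x\<in>sp P A. tens_eq (scl P) (sp P A) (sp P A) (d A (scl P c x))
            (map (\<lambda>(a,b). (scl P c a, b)) (d A x))) \<and>
       (\<forall>s. \<forall>x\<in>sp P A. inj_on s A \<longrightarrow>
          tens_eq (scl P) (sp P (s ` A)) (sp P (s ` A)) (d (s ` A) (rl P s A x))
            (map (\<lambda>(a,b). (rl P s A a, rl P s A b)) (d A x))) \<and>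
       (\<forall>x\<in>sp P A. tens3_eq (scl P) (sp P A) (sp P A) (sp P A)
            [(a, b, c). (v, c) \<leftarrow> d A x, (a, b) \<leftarrow> d A v]
            [(a, b, c). (a, v) \<leftarrow> d A x, (b, c) \<leftarrow> d A v]) \<and>
       lin_form (scl P) (sp P A) (e' A) \<and>
       (\<forall>x\<in>sp P A. (\<Sum>(a,b)\<leftarrow>d A x. scl P (e' A a) b) = x) \<and>
       (\<forall>x\<in>sp P A. (\<Sum>(a,b)\<leftarrow>d A x. scl P (e' A b) a) = x)) \<and>
    (\<forall>A B. finite A \<and> finite B \<and> A \<inter> B = {} \<longrightarrow>
       (\<forall>x\<in>sp P A. \<forall>y\<in>sp P B.
          tens_eq (scl P) (sp P (A \<union> B)) (sp P (A \<union> B)) (d (A \<union> B) (m A B x y))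
            [(m A B x1 y1, m A B x2 y2). (x1, x2) \<leftarrow> d A x, (y1, y2) \<leftarrow> d B y]) \<and>
       (\<forall>x\<in>sp P (A \<union> B).
          tens3_eq (scl P) (sp P A) (sp P B) (sp P (A \<union> B))
            [(a, b, c). (v, c) \<leftarrow> d (A \<union> B) x, (a, b) \<leftarrow> D A B v]
            [(a1, b1, m A B a2 b2). (a, b) \<leftarrow> D A B x, (a1, a2) \<leftarrow> d A a, (b1, b2) \<leftarrow> d B b])) \<and>
    tens_eq (scl P) (sp P {}) (sp P {}) (d {} u) [(u, u)] \<and>
    (\<forall>x\<in>sp P {}. (\<Sum>(a,b)\<leftarrow>d {} x. scl P (e a) b) = scl P (e x) u)"

definition character :: "('k::field, 'l, 'p::ab_group_add) spec
    \<Rightarrow> ('l set \<Rightarrow> 'l set \<Rightarrow> 'p \<Rightarrow> 'p \<Rightarrow> 'p) \<Rightarrow> 'p \<Rightarrow> ('l set \<Rightarrow> 'p \<Rightarrow> 'k) \<Rightarrow> bool" where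
  "character P m u f \<longleftrightarrow>
    (\<forall>A. finite A \<longrightarrow> lin_form (scl P) (sp P A) (f A)) \<and>
    (\<forall>A s. \<forall>x\<in>sp P A. finite A \<and> inj_on s A \<longrightarrow> f (s ` A) (rl P s A x) = f A x) \<and>
    (\<forall>A B. \<forall>x\<in>sp P A. \<forall>y\<in>sp P B. finite A \<and> finite B \<and> A \<inter> B = {} \<longrightarrow>
        f (A \<union> B) (m A B x y) = f A x * f B y) \<and>
    f {} u = 1"

definition conv :: "('l set \<Rightarrow> 'p \<Rightarrow> ('p \<times> 'p) list) \<Rightarrow> ('l set \<Rightarrow> 'p \<Rightarrow> 'k::field)
    \<Rightarrow> ('l set \<Rightarrow> 'p \<Rightarrow> 'k) \<Rightarrow> 'l set \<Rightarrow> 'p \<Rightarrow> 'k" where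
  "conv d f g A x = (\<Sum>(a,b)\<leftarrow>d A x. f A a * g A b)"

definition species_mor :: "('k::field, 'l, 'p::ab_group_add) spec \<Rightarrow> ('k, 'l, 'q::ab_group_add) spec
    \<Rightarrow> ('l set \<Rightarrow> 'p \<Rightarrow> 'q) \<Rightarrow> bool" where
  "species_mor P Q phi \<longleftrightarrow>
    (\<forall>A. finite A \<longrightarrow> (\<forall>x\<in>sp P A. phi A x \<in> sp Q A) \<and> lin_map (scl P) (sp P A) (scl Q) (phi A)) \<and>
    (\<forall>A s. \<forall>x\<in>sp P A. finite A \<and> inj_on s A \<longrightarrow> phi (s ` A) (rl P s A x) = rl Q s A (phi A x))"

definition mor_eq :: "('k, 'l, 'p) spec \<Rightarrow> ('l set \<Rightarrow> 'p \<Rightarrow> 'q) \<Rightarrow> ('l set \<Rightarrow> 'p \<Rightarrow> 'q) \<Rightarrow> bool" where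
  "mor_eq P phi psi \<longleftrightarrow> (\<forall>A. finite A \<longrightarrow> (\<forall>x\<in>sp P A. phi A x = psi A x))"

definition alg_mor :: "('k::field, 'l, 'p::ab_group_add) spec
    \<Rightarrow> ('l set \<Rightarrow> 'l set \<Rightarrow> 'p \<Rightarrow> 'p \<Rightarrow> 'p) \<Rightarrow> 'p
    \<Rightarrow> ('k, 'l, 'q::ab_group_add) spec \<Rightarrow> ('l set \<Rightarrow> 'l set \<Rightarrow> 'q \<Rightarrow> 'q \<Rightarrow> 'q) \<Rightarrow> 'q
    \<Rightarrow> ('l set \<Rightarrow> 'p \<Rightarrow> 'q) \<Rightarrow> bool" where
  "alg_mor P m u Q mQ uQ phi \<longleftrightarrow> species_mor P Q phi \<and>
    (\<forall>A B. \<forall>x\<in>sp P A. \<forall>y\<in>sp P B. finite A \<and> finite B \<and> A \<inter> B = {} \<longrightarrow>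
        phi (A \<union> B) (m A B x y) = mQ A B (phi A x) (phi B y)) \<and>
    phi {} u = uQ"

definition coalg_mor :: "('k::field, 'l, 'p::ab_group_add) spec
    \<Rightarrow> ('l set \<Rightarrow> 'l set \<Rightarrow> 'p \<Rightarrow> ('p \<times> 'p) list) \<Rightarrow> ('p \<Rightarrow> 'k)
    \<Rightarrow> ('k, 'l, 'q::ab_group_add) spec \<Rightarrow> ('l set \<Rightarrow> 'l set \<Rightarrow> 'q \<Rightarrow> ('q \<times> 'q) list) \<Rightarrow> ('q \<Rightarrow> 'k)
    \<Rightarrow> ('l set \<Rightarrow> 'p \<Rightarrow> 'q) \<Rightarrow> bool" where
  "coalg_mor P D e Q DQ eQ phi \<longleftrightarrow> species_mor P Q phi \<and>
    (\<forall>A B. \<forall>x\<in>sp P (A \<union> B). finite A \<and> finite B \<and> A \<inter> B = {} \<longrightarrow>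
        tens_eq (scl Q) (sp Q A) (sp Q B) (DQ A B (phi (A \<union> B) x))
          (map (\<lambda>(a,b). (phi A a, phi B b)) (D A B x))) \<and>
    (\<forall>x\<in>sp P {}. eQ (phi {} x) = e x)"

definition bialg_mor :: "('k::field, 'l, 'p::ab_group_add) spec
    \<Rightarrow> ('l set \<Rightarrow> 'l set \<Rightarrow> 'p \<Rightarrow> 'p \<Rightarrow> 'p) \<Rightarrow> 'p
    \<Rightarrow> ('l set \<Rightarrow> 'l set \<Rightarrow> 'p \<Rightarrow> ('p \<times> 'p) list) \<Rightarrow> ('p \<Rightarrow> 'k)
    \<Rightarrow> ('k, 'l, 'q::ab_group_add) spec
    \<Rightarrow> ('l set \<Rightarrow> 'l set \<Rightarrow> 'q \<Rightarrow> 'q \<Rightarrow> 'q) \<Rightarrow> 'q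
    \<Rightarrow> ('l set \<Rightarrow> 'l set \<Rightarrow> 'q \<Rightarrow> ('q \<times> 'q) list) \<Rightarrow> ('q \<Rightarrow> 'k)
    \<Rightarrow> ('l set \<Rightarrow> 'p \<Rightarrow> 'q) \<Rightarrow> bool" where
  "bialg_mor P m u D e Q mQ uQ DQ eQ phi \<longleftrightarrow>
     alg_mor P m u Q mQ uQ phi \<and> coalg_mor P D e Q DQ eQ phi"

definition ract :: "('k, 'l, 'q) spec \<Rightarrow> ('l set \<Rightarrow> 'p \<Rightarrow> ('p \<times> 'p) list)
    \<Rightarrow> ('l set \<Rightarrow> 'p \<Rightarrow> 'q::ab_group_add) \<Rightarrow> ('l set \<Rightarrow> 'p \<Rightarrow> 'k) \<Rightarrow> 'l set \<Rightarrow> 'p \<Rightarrow> 'q" where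
  "ract Q d phi f A x = (\<Sum>(a,b)\<leftarrow>d A x. scl Q (f A b) (phi A a))"

end

theory Submission
  imports Defs
begin

text \<open>Linear forms separate the points of a vector space, so every identity between elements
of Q can be tested after applying an arbitrary linear form \<psi>, and
\<psi> ((\<phi> \<leftarrow> f) x) = \<Sum> \<psi> (\<phi> x') f (x'') turns each claim into a scalar identity which is one
axiom of \<delta> read through the tensor product: linearity and naturality of \<delta> make
\<phi> \<leftarrow> f a morphism of species, the counit gives \<phi> \<leftarrow> \<epsilon>' = \<phi>, coassociativity gives the
action law, multiplicativity of \<delta> and of f gives stability of algebra morphisms, and the
compatibility of \<Delta> with \<delta> together with the counit condition gives stability of
coalgebra morphisms.\<close>

lemma lin_form_iff_lin_map: "lin_form s V l \<longleftrightarrow> lin_map s V (*) l"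
  unfolding lin_form_def lin_map_def by simp

lemma lin_map_compose:
  assumes "lin_map s2 W s3 g" and "lin_map s1 V s2 f" and "f ` V \<subseteq> W"
  shows "lin_map s1 V s3 (\<lambda>x. g (f x))"
  using assms unfolding lin_map_def by (auto simp: image_subset_iff)

lemma lin_form_compose:
  assumes "lin_form s2 W l" and "lin_map s1 V s2 f" and "f ` V \<subseteq> W"
  shows "lin_form s1 V (\<lambda>x. l (f x))"
  using assms lin_map_compose by (simp add: lin_form_iff_lin_map)

lemma lin_form_subset: "lin_form s W l \<Longrightarrow> V \<subseteq> W \<Longrightarrow> lin_form s V l"
  unfolding lin_form_def by blast

lemma (in module) sum_list_in_subspace:
  "subspace V \<Longrightarrow> (\<And>x. x \<in> set xs \<Longrightarrow> g x \<in> V) \<Longrightarrow> (\<Sum>x\<leftarrow>xs. g x) \<in> V"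
  by (induction xs) (auto simp: subspace_0 subspace_add)

lemma (in module) lin_map_sum_list:
  assumes V: "subspace V" and f: "lin_map scale V s2 f" and g: "\<And>x. x \<in> set xs \<Longrightarrow> g x \<in> V"
  shows "f (\<Sum>x\<leftarrow>xs. g x) = (\<Sum>x\<leftarrow>xs. f (g x))"
  using g
proof (induction xs)
  case Nil
  have "f 0 = f (0 + 0)" by simp
  also have "\<dots> = f 0 + f 0" using f subspace_0[OF V] unfolding lin_map_def by blast
  finally show ?case by simp
next
  case (Cons y xs)
  then show ?case
    using f sum_list_in_subspace[OF V, of xs g] unfolding lin_map_def by simp
qed

lemma (in module) lin_map_sum_list_scale:
  assumes V: "subspace V" and f: "lin_map scale V s2 f"
    and h: "\<And>a b. (a, b) \<in> set t \<Longrightarrow> h a b \<in> V"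
  shows "f (\<Sum>(a,b)\<leftarrow>t. g a b *s h a b) = (\<Sum>(a,b)\<leftarrow>t. s2 (g a b) (f (h a b)))"
proof -
  have "f (\<Sum>(a,b)\<leftarrow>t. g a b *s h a b) = (\<Sum>p\<leftarrow>t. f (case p of (a, b) \<Rightarrow> g a b *s h a b))"
    by (rule lin_map_sum_list[OF V f]) (auto intro: subspace_scale[OF V] h)
  also have "\<dots> = (\<Sum>(a,b)\<leftarrow>t. s2 (g a b) (f (h a b)))"
    using f h unfolding lin_map_def by (intro arg_cong[where f = sum_list] map_cong) auto
  finally show ?thesis .
qed

lemma lin_forms_separate:
  fixes s :: "'k::field \<Rightarrow> 'q::ab_group_add \<Rightarrow> 'q"
  assumes "vector_space s" and "\<And>\<psi>. lin_form s UNIV \<psi> \<Longrightarrow> \<psi> x = \<psi> y"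
  shows "x = y"
proof (rule ccontr)
  assume "x \<noteq> y"
  interpret vector_space_pair s "(*) :: 'k \<Rightarrow> 'k \<Rightarrow> 'k"
    by (simp add: vector_space_pair_def assms(1)) (unfold_locales, auto simp: algebra_simps)
  obtain \<psi> where \<psi>: "Vector_Spaces.linear s (*) \<psi>" "\<psi> (x - y) = 1"
    using linear_independent_extend[of "{x - y}" "\<lambda>_. 1"] \<open>x \<noteq> y\<close> by auto
  have "lin_form s UNIV \<psi>"
    using \<psi>(1) unfolding Vector_Spaces.linear_iff lin_form_def by auto
  then have "\<psi> (x - y) = 0"
    using assms(2) linear_diff[OF \<psi>(1)] by simp
  with \<psi>(2) show False by simp
qed

lemma sum_list_prod_cong:
  "(\<And>a b. (a, b) \<in> set t \<Longrightarrow> F a b = G a b) \<Longrightarrow> (\<Sum>(a,b)\<leftarrow>t. F a b) = (\<Sum>(a,b)\<leftarrow>t. G a b)"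
  by (metis (mono_tags, lifting) case_prod_conv map_cong surj_pair)

lemma sum_list_prod_cong2:
  "(\<And>a1 a2 b1 b2. (a1, a2) \<in> set s \<Longrightarrow> (b1, b2) \<in> set t \<Longrightarrow> F a1 a2 b1 b2 = G a1 a2 b1 b2) \<Longrightarrow>
   (\<Sum>(a1,a2)\<leftarrow>s. \<Sum>(b1,b2)\<leftarrow>t. F a1 a2 b1 b2) = (\<Sum>(a1,a2)\<leftarrow>s. \<Sum>(b1,b2)\<leftarrow>t. G a1 a2 b1 b2)"
  by (intro sum_list_prod_cong) blast

lemma sum_list_concat_map: "(\<Sum>x\<leftarrow>concat (map g xs). F x) = (\<Sum>y\<leftarrow>xs. \<Sum>x\<leftarrow>g y. F x)"
  by (induction xs) auto

lemma sum_list_mult_sum_list: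
  "(\<Sum>(a1,a2)\<leftarrow>xs. F a1 a2) * (\<Sum>(b1,b2)\<leftarrow>ys. G b1 b2) =
   (\<Sum>(a1,a2)\<leftarrow>xs. \<Sum>(b1,b2)\<leftarrow>ys. F a1 a2 * (G b1 b2 :: 'a::semiring_0))"
  by (simp add: sum_list_mult_const sum_list_const_mult split_def)

lemma tens_eqD:
  "tens_eq s V W t t' \<Longrightarrow> lin_form s V l \<Longrightarrow> lin_form s W n \<Longrightarrow>
   (\<Sum>(a,b)\<leftarrow>t. l a * n b) = (\<Sum>(a,b)\<leftarrow>t'. l a * n b)"
  unfolding tens_eq_def by simp

lemma tens3_eqD:
  "tens3_eq s U V W t t' \<Longrightarrow> lin_form s U k \<Longrightarrow> lin_form s V l \<Longrightarrow> lin_form s W n \<Longrightarrow>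
   (\<Sum>(a,b,c)\<leftarrow>t. k a * l b * n c) = (\<Sum>(a,b,c)\<leftarrow>t'. k a * l b * n c)"
  unfolding tens3_eq_def by simp

lemma species_vector_space: "species P \<Longrightarrow> vector_space (scl P)"
  unfolding species_def by simp

lemma species_module: "species P \<Longrightarrow> module (scl P)"
  by (simp add: module_iff_vector_space species_vector_space)

lemma species_subspace: "species P \<Longrightarrow> finite A \<Longrightarrow> module.subspace (scl P) (sp P A)"
  unfolding species_def by simp

lemma species_rl_closed: "species P \<Longrightarrow> finite A \<Longrightarrow> inj_on s A \<Longrightarrow> x \<in> sp P A \<Longrightarrow> rl P s A x \<in> sp P (s ` A)"
  unfolding species_def by simp

lemma species_rl_lin_map: "species P \<Longrightarrow> finite A \<Longrightarrow> inj_on s A \<Longrightarrow> lin_map (scl P) (sp P A) (scl P) (rl P s A)"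
  unfolding species_def by simp

lemma species_mor_closed: "species_mor P Q phi \<Longrightarrow> finite A \<Longrightarrow> x \<in> sp P A \<Longrightarrow> phi A x \<in> sp Q A"
  unfolding species_mor_def by simp

lemma species_mor_lin_map: "species_mor P Q phi \<Longrightarrow> finite A \<Longrightarrow> lin_map (scl P) (sp P A) (scl Q) (phi A)"
  unfolding species_mor_def by simp

lemma species_mor_rl:
  "species_mor P Q phi \<Longrightarrow> finite A \<Longrightarrow> inj_on s A \<Longrightarrow> x \<in> sp P A \<Longrightarrow>
   phi (s ` A) (rl P s A x) = rl Q s A (phi A x)"
  unfolding species_mor_def by simp

lemma species_mor_lin_form_compose:
  assumes "species_mor P Q phi" and "finite A" and "lin_form (scl Q) V l" and "sp Q A \<subseteq> V"
  shows "lin_form (scl P) (sp P A) (\<lambda>x. l (phi A x))"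
  using assms species_mor_closed[OF assms(1,2)]
  by (intro lin_form_compose[OF assms(3) species_mor_lin_map[OF assms(1,2)]]) blast

lemma character_lin_form: "character P m u f \<Longrightarrow> finite A \<Longrightarrow> lin_form (scl P) (sp P A) (f A)"
  unfolding character_def by simp

lemma character_rl:
  "character P m u f \<Longrightarrow> finite A \<Longrightarrow> inj_on s A \<Longrightarrow> x \<in> sp P A \<Longrightarrow> f (s ` A) (rl P s A x) = f A x"
  unfolding character_def by simp

lemma character_mult:
  "character P m u f \<Longrightarrow> finite A \<Longrightarrow> finite B \<Longrightarrow> A \<inter> B = {} \<Longrightarrow> x \<in> sp P A \<Longrightarrow> y \<in> sp P B \<Longrightarrow>
   f (A \<union> B) (m A B x y) = f A x * f B y"
  unfolding character_def by simp

lemma character_unit: "character P m u f \<Longrightarrow> f {} u = 1"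
  unfolding character_def by simp

lemma twisted_algebra_lin_map_left:
  "twisted_algebra Q mQ uQ \<Longrightarrow> finite A \<Longrightarrow> finite B \<Longrightarrow> A \<inter> B = {} \<Longrightarrow> y \<in> sp Q B \<Longrightarrow>
   lin_map (scl Q) (sp Q A) (scl Q) (\<lambda>x. mQ A B x y)"
  unfolding twisted_algebra_def by simp

lemma twisted_algebra_lin_map_right:
  "twisted_algebra Q mQ uQ \<Longrightarrow> finite A \<Longrightarrow> finite B \<Longrightarrow> A \<inter> B = {} \<Longrightarrow> x \<in> sp Q A \<Longrightarrow>
   lin_map (scl Q) (sp Q B) (scl Q) (\<lambda>y. mQ A B x y)"
  unfolding twisted_algebra_def by simp

lemma twisted_coalgebra_closed:
  "twisted_coalgebra Q DQ eQ \<Longrightarrow> finite A \<Longrightarrow> finite B \<Longrightarrow> A \<inter> B = {} \<Longrightarrow> x \<in> sp Q (A \<union> B) \<Longrightarrow>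
   set (DQ A B x) \<subseteq> sp Q A \<times> sp Q B"
  unfolding twisted_coalgebra_def by simp

lemma twisted_coalgebra_counit_lin_form: "twisted_coalgebra Q DQ eQ \<Longrightarrow> lin_form (scl Q) (sp Q {}) eQ"
  unfolding twisted_coalgebra_def by simp

lemma lin_form_coproduct_pairing:
  assumes TQ: "twisted_coalgebra Q DQ eQ" and A: "finite A" and B: "finite B" and AB: "A \<inter> B = {}"
    and l: "lin_form (scl Q) (sp Q A) l" and n: "lin_form (scl Q) (sp Q B) n"
  shows "lin_form (scl Q) (sp Q (A \<union> B)) (\<lambda>x. \<Sum>(a,b)\<leftarrow>DQ A B x. l a * n b)"
  unfolding lin_form_def
proof (intro conjI ballI allI)
  fix x y assume x: "x \<in> sp Q (A \<union> B)" and y: "y \<in> sp Q (A \<union> B)"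
  have "tens_eq (scl Q) (sp Q A) (sp Q B) (DQ A B (x + y)) (DQ A B x @ DQ A B y)"
    using TQ A B AB x y unfolding twisted_coalgebra_def by simp
  then show "(\<Sum>(a,b)\<leftarrow>DQ A B (x + y). l a * n b) =
      (\<Sum>(a,b)\<leftarrow>DQ A B x. l a * n b) + (\<Sum>(a,b)\<leftarrow>DQ A B y. l a * n b)"
    using tens_eqD[OF _ l n] by simp
next
  fix c x assume x: "x \<in> sp Q (A \<union> B)"
  have "tens_eq (scl Q) (sp Q A) (sp Q B) (DQ A B (scl Q c x)) (map (\<lambda>(a,b). (scl Q c a, b)) (DQ A B x))"
    using TQ A B AB x unfolding twisted_coalgebra_def by simp
  then have "(\<Sum>(a,b)\<leftarrow>DQ A B (scl Q c x). l a * n b) = (\<Sum>(a,b)\<leftarrow>DQ A B x. l (scl Q c a) * n b)"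
    using tens_eqD[OF _ l n] by (simp add: split_def o_def)
  also have "\<dots> = (\<Sum>(a,b)\<leftarrow>DQ A B x. c * (l a * n b))"
    using twisted_coalgebra_closed[OF TQ A B AB x] l
    by (intro sum_list_prod_cong) (auto simp: lin_form_def)
  finally show "(\<Sum>(a,b)\<leftarrow>DQ A B (scl Q c x). l a * n b) = c * (\<Sum>(a,b)\<leftarrow>DQ A B x. l a * n b)"
    by (simp add: sum_list_const_mult split_def)
qed

context
  fixes P :: "('k::field, 'l, 'p::ab_group_add) spec"
    and m :: "'l set \<Rightarrow> 'l set \<Rightarrow> 'p \<Rightarrow> 'p \<Rightarrow> 'p" and u :: 'p
    and D :: "'l set \<Rightarrow> 'l set \<Rightarrow> 'p \<Rightarrow> ('p \<times> 'p) list" and e :: "'p \<Rightarrow> 'k"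
    and d :: "'l set \<Rightarrow> 'p \<Rightarrow> ('p \<times> 'p) list" and e' :: "'l set \<Rightarrow> 'p \<Rightarrow> 'k"
    and Q :: "('k, 'l, 'q::ab_group_add) spec"
  assumes dtb: "double_twisted_bialgebra P m u D e d e'" and Q: "species Q"
begin

lemma species_P: "species P"
  using dtb unfolding double_twisted_bialgebra_def twisted_bialgebra_def twisted_algebra_def by simp

lemma unit_closed: "u \<in> sp P {}"
  using dtb unfolding double_twisted_bialgebra_def twisted_bialgebra_def twisted_algebra_def by simp

lemma mult_closed:
  "finite A \<Longrightarrow> finite B \<Longrightarrow> A \<inter> B = {} \<Longrightarrow> x \<in> sp P A \<Longrightarrow> y \<in> sp P B \<Longrightarrow> m A B x y \<in> sp P (A \<union> B)"
  using dtb unfolding double_twisted_bialgebra_def twisted_bialgebra_def twisted_algebra_def by simp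

lemma coproduct_closed:
  "finite A \<Longrightarrow> finite B \<Longrightarrow> A \<inter> B = {} \<Longrightarrow> x \<in> sp P (A \<union> B) \<Longrightarrow>
   set (D A B x) \<subseteq> sp P A \<times> sp P B"
  using dtb unfolding double_twisted_bialgebra_def twisted_bialgebra_def twisted_coalgebra_def by simp

lemma delta_closed: "finite A \<Longrightarrow> x \<in> sp P A \<Longrightarrow> set (d A x) \<subseteq> sp P A \<times> sp P A"
  using dtb unfolding double_twisted_bialgebra_def by simp

lemma delta_add:
  "finite A \<Longrightarrow> x \<in> sp P A \<Longrightarrow> y \<in> sp P A \<Longrightarrow>
   tens_eq (scl P) (sp P A) (sp P A) (d A (x + y)) (d A x @ d A y)"
  using dtb unfolding double_twisted_bialgebra_def by simp

lemma delta_scale: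
  "finite A \<Longrightarrow> x \<in> sp P A \<Longrightarrow>
   tens_eq (scl P) (sp P A) (sp P A) (d A (scl P c x)) (map (\<lambda>(a,b). (scl P c a, b)) (d A x))"
  using dtb unfolding double_twisted_bialgebra_def by simp

lemma delta_rl:
  "finite A \<Longrightarrow> x \<in> sp P A \<Longrightarrow> inj_on s A \<Longrightarrow>
   tens_eq (scl P) (sp P (s ` A)) (sp P (s ` A)) (d (s ` A) (rl P s A x))
     (map (\<lambda>(a,b). (rl P s A a, rl P s A b)) (d A x))"
  using dtb unfolding double_twisted_bialgebra_def by simp

lemma delta_coassoc:
  "finite A \<Longrightarrow> x \<in> sp P A \<Longrightarrow>
   tens3_eq (scl P) (sp P A) (sp P A) (sp P A)
     [(a, b, c). (v, c) \<leftarrow> d A x, (a, b) \<leftarrow> d A v] [(a, b, c). (a, v) \<leftarrow> d A x, (b, c) \<leftarrow> d A v]"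
  using dtb unfolding double_twisted_bialgebra_def by simp

lemma delta_counit: "finite A \<Longrightarrow> x \<in> sp P A \<Longrightarrow> (\<Sum>(a,b)\<leftarrow>d A x. scl P (e' A b) a) = x"
  using dtb unfolding double_twisted_bialgebra_def by simp

lemma delta_mult:
  "finite A \<Longrightarrow> finite B \<Longrightarrow> A \<inter> B = {} \<Longrightarrow> x \<in> sp P A \<Longrightarrow> y \<in> sp P B \<Longrightarrow>
   tens_eq (scl P) (sp P (A \<union> B)) (sp P (A \<union> B)) (d (A \<union> B) (m A B x y))
     [(m A B x1 y1, m A B x2 y2). (x1, x2) \<leftarrow> d A x, (y1, y2) \<leftarrow> d B y]"
  using dtb unfolding double_twisted_bialgebra_def by simp

lemma delta_unit: "tens_eq (scl P) (sp P {}) (sp P {}) (d {} u) [(u, u)]"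
  using dtb unfolding double_twisted_bialgebra_def by simp

lemma coproduct_delta:
  "finite A \<Longrightarrow> finite B \<Longrightarrow> A \<inter> B = {} \<Longrightarrow> x \<in> sp P (A \<union> B) \<Longrightarrow>
   tens3_eq (scl P) (sp P A) (sp P B) (sp P (A \<union> B))
     [(a, b, c). (v, c) \<leftarrow> d (A \<union> B) x, (a, b) \<leftarrow> D A B v]
     [(a1, b1, m A B a2 b2). (a, b) \<leftarrow> D A B x, (a1, a2) \<leftarrow> d A a, (b1, b2) \<leftarrow> d B b]"
  using dtb unfolding double_twisted_bialgebra_def by simp

lemma counit_delta: "x \<in> sp P {} \<Longrightarrow> (\<Sum>(a,b)\<leftarrow>d {} x. scl P (e a) b) = scl P (e x) u"
  using dtb unfolding double_twisted_bialgebra_def by simp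

lemma ract_closed:
  assumes phi: "species_mor P Q phi" and A: "finite A" and x: "x \<in> sp P A"
  shows "ract Q d phi f A x \<in> sp Q A"
  unfolding ract_def
  using species_mor_closed[OF phi A] delta_closed[OF A x]
  by (intro module.sum_list_in_subspace[OF species_module[OF Q] species_subspace[OF Q A]])
    (auto intro: module.subspace_scale[OF species_module[OF Q] species_subspace[OF Q A]])

lemma lin_form_ract:
  assumes phi: "species_mor P Q phi" and A: "finite A" and x: "x \<in> sp P A"
    and l: "lin_form (scl Q) V l" and V: "sp Q A \<subseteq> V"
  shows "l (ract Q d phi f A x) = (\<Sum>(a,b)\<leftarrow>d A x. l (phi A a) * f A b)"
proof -
  have "lin_map (scl Q) (sp Q A) (*) l"
    using lin_form_subset[OF l V] by (simp add: lin_form_iff_lin_map)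
  then have "l (\<Sum>(a,b)\<leftarrow>d A x. scl Q (f A b) (phi A a)) = (\<Sum>(a,b)\<leftarrow>d A x. f A b * l (phi A a))"
    by (rule module.lin_map_sum_list_scale[OF species_module[OF Q] species_subspace[OF Q A]])
      (use species_mor_closed[OF phi A] delta_closed[OF A x] in blast)
  then show ?thesis unfolding ract_def
    by (simp add: mult.commute)
qed

lemma ract_add:
  assumes phi: "species_mor P Q phi" and A: "finite A" and x: "x \<in> sp P A" and y: "y \<in> sp P A"
    and f: "lin_form (scl P) (sp P A) (f A)"
  shows "ract Q d phi f A (x + y) = ract Q d phi f A x + ract Q d phi f A y"
proof (rule lin_forms_separate[OF species_vector_space[OF Q]])
  fix \<psi> assume \<psi>: "lin_form (scl Q) UNIV \<psi>"
  have "x + y \<in> sp P A"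
    using module.subspace_add[OF species_module[OF species_P] species_subspace[OF species_P A] x y] .
  then have "\<psi> (ract Q d phi f A (x + y)) = (\<Sum>(a,b)\<leftarrow>d A (x + y). \<psi> (phi A a) * f A b)"
    using lin_form_ract[OF phi A _ \<psi>] by blast
  also have "\<dots> = (\<Sum>(a,b)\<leftarrow>d A x @ d A y. \<psi> (phi A a) * f A b)"
    using tens_eqD[OF delta_add[OF A x y] species_mor_lin_form_compose[OF phi A \<psi>] f] by simp
  also have "\<dots> = \<psi> (ract Q d phi f A x + ract Q d phi f A y)"
    using \<psi> lin_form_ract[OF phi A x \<psi>] lin_form_ract[OF phi A y \<psi>] by (simp add: lin_form_def)
  finally show "\<psi> (ract Q d phi f A (x + y)) = \<psi> (ract Q d phi f A x + ract Q d phi f A y)" .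
qed

lemma ract_scale:
  assumes phi: "species_mor P Q phi" and A: "finite A" and x: "x \<in> sp P A"
    and f: "lin_form (scl P) (sp P A) (f A)"
  shows "ract Q d phi f A (scl P c x) = scl Q c (ract Q d phi f A x)"
proof (rule lin_forms_separate[OF species_vector_space[OF Q]])
  fix \<psi> assume \<psi>: "lin_form (scl Q) UNIV \<psi>"
  have l: "lin_form (scl P) (sp P A) (\<lambda>y. \<psi> (phi A y))"
    by (rule species_mor_lin_form_compose[OF phi A \<psi> subset_UNIV])
  have "scl P c x \<in> sp P A"
    using module.subspace_scale[OF species_module[OF species_P] species_subspace[OF species_P A] x] .
  then have "\<psi> (ract Q d phi f A (scl P c x)) = (\<Sum>(a,b)\<leftarrow>d A (scl P c x). \<psi> (phi A a) * f A b)"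
    using lin_form_ract[OF phi A _ \<psi>] by blast
  also have "\<dots> = (\<Sum>(a,b)\<leftarrow>d A x. \<psi> (phi A (scl P c a)) * f A b)"
    using tens_eqD[OF delta_scale[OF A x] l f] by (simp add: split_def o_def)
  also have "\<dots> = (\<Sum>(a,b)\<leftarrow>d A x. c * (\<psi> (phi A a) * f A b))"
    using delta_closed[OF A x] l by (intro sum_list_prod_cong) (auto simp: lin_form_def)
  also have "\<dots> = \<psi> (scl Q c (ract Q d phi f A x))"
    using \<psi> lin_form_ract[OF phi A x \<psi>]
    by (simp add: lin_form_def sum_list_const_mult split_def)
  finally show "\<psi> (ract Q d phi f A (scl P c x)) = \<psi> (scl Q c (ract Q d phi f A x))" .
qed

lemma ract_rl:
  assumes phi: "species_mor P Q phi" and f: "character P m u f"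
    and A: "finite A" and x: "x \<in> sp P A" and s: "inj_on s A"
  shows "ract Q d phi f (s ` A) (rl P s A x) = rl Q s A (ract Q d phi f A x)"
proof (rule lin_forms_separate[OF species_vector_space[OF Q]])
  fix \<psi> assume \<psi>: "lin_form (scl Q) UNIV \<psi>"
  have sA: "finite (s ` A)" using A by simp
  have "rl P s A x \<in> sp P (s ` A)" by (rule species_rl_closed[OF species_P A s x])
  then have "\<psi> (ract Q d phi f (s ` A) (rl P s A x)) =
      (\<Sum>(a,b)\<leftarrow>d (s ` A) (rl P s A x). \<psi> (phi (s ` A) a) * f (s ` A) b)"
    using lin_form_ract[OF phi sA _ \<psi>] by blast
  also have "\<dots> = (\<Sum>(a,b)\<leftarrow>d A x. \<psi> (phi (s ` A) (rl P s A a)) * f (s ` A) (rl P s A b))"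
    using tens_eqD[OF delta_rl[OF A x s] species_mor_lin_form_compose[OF phi sA \<psi> subset_UNIV]
        character_lin_form[OF f sA]]
    by (simp add: split_def o_def)
  also have "\<dots> = (\<Sum>(a,b)\<leftarrow>d A x. \<psi> (rl Q s A (phi A a)) * f A b)"
    using delta_closed[OF A x]
    by (intro sum_list_prod_cong) (auto simp: species_mor_rl[OF phi A s] character_rl[OF f A s])
  also have "\<dots> = \<psi> (rl Q s A (ract Q d phi f A x))"
  proof -
    have "lin_form (scl Q) (sp Q A) (\<lambda>y. \<psi> (rl Q s A y))"
      using species_rl_closed[OF Q A s]
      by (intro lin_form_compose[OF \<psi> species_rl_lin_map[OF Q A s]]) auto
    from lin_form_ract[OF phi A x this subset_refl] show ?thesis by simp
  qed
  finally show "\<psi> (ract Q d phi f (s ` A) (rl P s A x)) = \<psi> (rl Q s A (ract Q d phi f A x))" .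
qed

lemma species_mor_ract:
  assumes phi: "species_mor P Q phi" and f: "character P m u f"
  shows "species_mor P Q (ract Q d phi f)"
  unfolding species_mor_def lin_map_def
  using ract_closed[OF phi] ract_add[OF phi] ract_scale[OF phi] ract_rl[OF phi f]
    character_lin_form[OF f]
  by simp

lemma ract_delta_counit:
  assumes phi: "species_mor P Q phi"
  shows "mor_eq P (ract Q d phi e') phi"
  unfolding mor_eq_def
proof (intro allI impI ballI)
  fix A x assume A: "finite A" and x: "x \<in> sp P A"
  have "phi A x = phi A (\<Sum>(a,b)\<leftarrow>d A x. scl P (e' A b) a)"
    by (simp add: delta_counit[OF A x])
  also have "\<dots> = ract Q d phi e' A x"
    unfolding ract_def
    by (rule module.lin_map_sum_list_scale[OF species_module[OF species_P] species_subspace[OF species_P A]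
          species_mor_lin_map[OF phi A]])
      (use delta_closed[OF A x] in blast)
  finally show "ract Q d phi e' A x = phi A x" ..
qed

lemma ract_ract:
  assumes phi: "species_mor P Q phi" and f: "character P m u f" and g: "character P m u g"
  shows "mor_eq P (ract Q d (ract Q d phi f) g) (ract Q d phi (conv d f g))"
  unfolding mor_eq_def
proof (intro allI impI ballI)
  fix A x assume A: "finite A" and x: "x \<in> sp P A"
  show "ract Q d (ract Q d phi f) g A x = ract Q d phi (conv d f g) A x"
  proof (rule lin_forms_separate[OF species_vector_space[OF Q]])
    fix \<psi> assume \<psi>: "lin_form (scl Q) UNIV \<psi>"
    have "\<psi> (ract Q d (ract Q d phi f) g A x) = (\<Sum>(v,c)\<leftarrow>d A x. \<psi> (ract Q d phi f A v) * g A c)"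
      by (rule lin_form_ract[OF species_mor_ract[OF phi f] A x \<psi> subset_UNIV])
    also have "\<dots> = (\<Sum>(v,c)\<leftarrow>d A x. \<Sum>(a,b)\<leftarrow>d A v. \<psi> (phi A a) * f A b * g A c)"
      using delta_closed[OF A x]
      by (intro sum_list_prod_cong) (auto simp: lin_form_ract[OF phi A _ \<psi>] sum_list_mult_const split_def)
    also have "\<dots> = (\<Sum>(a,b,c)\<leftarrow>[(a, b, c). (v, c) \<leftarrow> d A x, (a, b) \<leftarrow> d A v]. \<psi> (phi A a) * f A b * g A c)"
      by (simp add: sum_list_concat_map split_def o_def)
    also have "\<dots> = (\<Sum>(a,b,c)\<leftarrow>[(a, b, c). (a, v) \<leftarrow> d A x, (b, c) \<leftarrow> d A v]. \<psi> (phi A a) * f A b * g A c)"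
      by (rule tens3_eqD[OF delta_coassoc[OF A x] species_mor_lin_form_compose[OF phi A \<psi> subset_UNIV]
            character_lin_form[OF f A] character_lin_form[OF g A]])
    also have "\<dots> = (\<Sum>(a,v)\<leftarrow>d A x. \<psi> (phi A a) * conv d f g A v)"
      by (simp add: sum_list_concat_map split_def o_def conv_def sum_list_const_mult mult.assoc)
    also have "\<dots> = \<psi> (ract Q d phi (conv d f g) A x)"
      by (rule lin_form_ract[OF phi A x \<psi> subset_UNIV, symmetric])
    finally show "\<psi> (ract Q d (ract Q d phi f) g A x) = \<psi> (ract Q d phi (conv d f g) A x)" .
  qed
qed

lemma ract_mult:
  assumes TQ: "twisted_algebra Q mQ uQ" and phi: "alg_mor P m u Q mQ uQ phi" and f: "character P m u f"
    and A: "finite A" and B: "finite B" and AB: "A \<inter> B = {}" and x: "x \<in> sp P A" and y: "y \<in> sp P B"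
  shows "ract Q d phi f (A \<union> B) (m A B x y) = mQ A B (ract Q d phi f A x) (ract Q d phi f B y)"
proof (rule lin_forms_separate[OF species_vector_space[OF Q]])
  fix \<psi> assume \<psi>: "lin_form (scl Q) UNIV \<psi>"
  have phi_sp: "species_mor P Q phi" and phi_m: "\<And>a b. a \<in> sp P A \<Longrightarrow> b \<in> sp P B \<Longrightarrow>
      phi (A \<union> B) (m A B a b) = mQ A B (phi A a) (phi B b)"
    using phi A B AB unfolding alg_mor_def by simp_all
  have AB_fin: "finite (A \<union> B)" using A B by simp
  have \<psi>_left: "lin_form (scl Q) (sp Q A) (\<lambda>z. \<psi> (mQ A B z w))" if "w \<in> sp Q B" for w
    by (intro lin_form_compose[OF \<psi> twisted_algebra_lin_map_left[OF TQ A B AB that]]) simp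
  have \<psi>_right: "lin_form (scl Q) (sp Q B) (\<lambda>z. \<psi> (mQ A B w z))" if "w \<in> sp Q A" for w
    by (intro lin_form_compose[OF \<psi> twisted_algebra_lin_map_right[OF TQ A B AB that]]) simp
  from mult_closed[OF A B AB x y] have "\<psi> (ract Q d phi f (A \<union> B) (m A B x y)) =
      (\<Sum>(a,b)\<leftarrow>d (A \<union> B) (m A B x y). \<psi> (phi (A \<union> B) a) * f (A \<union> B) b)"
    using lin_form_ract[OF phi_sp AB_fin _ \<psi>] by blast
  also have "\<dots> = (\<Sum>(x1,x2)\<leftarrow>d A x. \<Sum>(y1,y2)\<leftarrow>d B y.
      \<psi> (phi (A \<union> B) (m A B x1 y1)) * f (A \<union> B) (m A B x2 y2))"
    using tens_eqD[OF delta_mult[OF A B AB x y] species_mor_lin_form_compose[OF phi_sp AB_fin \<psi> subset_UNIV]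
        character_lin_form[OF f AB_fin]]
    by (simp add: sum_list_concat_map split_def o_def)
  also have "\<dots> = (\<Sum>(x1,x2)\<leftarrow>d A x. \<Sum>(y1,y2)\<leftarrow>d B y. \<psi> (mQ A B (phi A x1) (phi B y1)) * f B y2 * f A x2)"
    by (intro sum_list_prod_cong2)
      (auto simp: phi_m character_mult[OF f A B AB] dest!: subsetD[OF delta_closed[OF A x]] subsetD[OF delta_closed[OF B y]])
  also have "\<dots> = (\<Sum>(x1,x2)\<leftarrow>d A x. (\<Sum>(y1,y2)\<leftarrow>d B y. \<psi> (mQ A B (phi A x1) (phi B y1)) * f B y2) * f A x2)"
    by (simp add: sum_list_mult_const split_def)
  also have "\<dots> = (\<Sum>(x1,x2)\<leftarrow>d A x. \<psi> (mQ A B (phi A x1) (ract Q d phi f B y)) * f A x2)"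
    using delta_closed[OF A x] species_mor_closed[OF phi_sp A]
    by (intro sum_list_prod_cong) (auto simp: lin_form_ract[OF phi_sp B y \<psi>_right subset_refl])
  also have "\<dots> = \<psi> (mQ A B (ract Q d phi f A x) (ract Q d phi f B y))"
    using lin_form_ract[OF phi_sp A x \<psi>_left[OF ract_closed[OF phi_sp B y]] subset_refl] by simp
  finally show "\<psi> (ract Q d phi f (A \<union> B) (m A B x y)) = \<psi> (mQ A B (ract Q d phi f A x) (ract Q d phi f B y))" .
qed

lemma ract_unit:
  assumes phi: "alg_mor P m u Q mQ uQ phi" and f: "character P m u f"
  shows "ract Q d phi f {} u = uQ"
proof (rule lin_forms_separate[OF species_vector_space[OF Q]])
  fix \<psi> assume \<psi>: "lin_form (scl Q) UNIV \<psi>"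
  have phi_sp: "species_mor P Q phi" and phi_u: "phi {} u = uQ"
    using phi unfolding alg_mor_def by simp_all
  have "\<psi> (ract Q d phi f {} u) = (\<Sum>(a,b)\<leftarrow>d {} u. \<psi> (phi {} a) * f {} b)"
    by (rule lin_form_ract[OF phi_sp finite.emptyI unit_closed \<psi> subset_UNIV])
  also have "\<dots> = \<psi> (phi {} u) * f {} u"
    using tens_eqD[OF delta_unit species_mor_lin_form_compose[OF phi_sp finite.emptyI \<psi> subset_UNIV]
        character_lin_form[OF f finite.emptyI]]
    by simp
  finally show "\<psi> (ract Q d phi f {} u) = \<psi> uQ"
    by (simp add: phi_u character_unit[OF f])
qed

lemma alg_mor_ract:
  assumes TQ: "twisted_algebra Q mQ uQ" and phi: "alg_mor P m u Q mQ uQ phi" and f: "character P m u f"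
  shows "alg_mor P m u Q mQ uQ (ract Q d phi f)"
proof -
  have "species_mor P Q phi" using phi unfolding alg_mor_def by simp
  then show ?thesis
    unfolding alg_mor_def
    using species_mor_ract[OF _ f] ract_mult[OF TQ phi f] ract_unit[OF phi f] by blast
qed

lemma coproduct_pairing_ract:
  assumes TQ: "twisted_coalgebra Q DQ eQ" and phi: "coalg_mor P D e Q DQ eQ phi" and f: "character P m u f"
    and A: "finite A" and B: "finite B" and AB: "A \<inter> B = {}" and x: "x \<in> sp P (A \<union> B)"
    and l: "lin_form (scl Q) (sp Q A) l" and n: "lin_form (scl Q) (sp Q B) n"
  shows "(\<Sum>(a,b)\<leftarrow>DQ A B (ract Q d phi f (A \<union> B) x). l a * n b) =
         (\<Sum>(a,b)\<leftarrow>D A B x. l (ract Q d phi f A a) * n (ract Q d phi f B b))"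
proof -
  have phi_sp: "species_mor P Q phi"
    and phi_D: "\<And>v. v \<in> sp P (A \<union> B) \<Longrightarrow> tens_eq (scl Q) (sp Q A) (sp Q B) (DQ A B (phi (A \<union> B) v))
                   (map (\<lambda>(a,b). (phi A a, phi B b)) (D A B v))"
    using phi A B AB unfolding coalg_mor_def by simp_all
  have AB_fin: "finite (A \<union> B)" using A B by simp
  define pairing where "pairing z = (\<Sum>(a,b)\<leftarrow>DQ A B z. l a * n b)" for z
  have pairing: "lin_form (scl Q) (sp Q (A \<union> B)) pairing"
    unfolding pairing_def by (rule lin_form_coproduct_pairing[OF TQ A B AB l n])
  have lphi: "lin_form (scl P) (sp P A) (\<lambda>z. l (phi A z))"
    and nphi: "lin_form (scl P) (sp P B) (\<lambda>z. n (phi B z))"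
    by (rule species_mor_lin_form_compose[OF phi_sp A l subset_refl],
        rule species_mor_lin_form_compose[OF phi_sp B n subset_refl])
  have "pairing (ract Q d phi f (A \<union> B) x) =
      (\<Sum>(v,c)\<leftarrow>d (A \<union> B) x. pairing (phi (A \<union> B) v) * f (A \<union> B) c)"
    by (rule lin_form_ract[OF phi_sp AB_fin x pairing subset_refl])
  also have "\<dots> = (\<Sum>(v,c)\<leftarrow>d (A \<union> B) x. \<Sum>(a,b)\<leftarrow>D A B v. l (phi A a) * n (phi B b) * f (A \<union> B) c)"
    using tens_eqD[OF phi_D l n]
    by (intro sum_list_prod_cong)
      (auto simp: pairing_def sum_list_mult_const split_def o_def dest!: subsetD[OF delta_closed[OF AB_fin x]])
  also have "\<dots> = (\<Sum>(a,b,c)\<leftarrow>[(a, b, c). (v, c) \<leftarrow> d (A \<union> B) x, (a, b) \<leftarrow> D A B v].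
      l (phi A a) * n (phi B b) * f (A \<union> B) c)"
    by (simp add: sum_list_concat_map split_def o_def)
  also have "\<dots> = (\<Sum>(a,b,c)\<leftarrow>[(a1, b1, m A B a2 b2). (a, b) \<leftarrow> D A B x, (a1, a2) \<leftarrow> d A a, (b1, b2) \<leftarrow> d B b].
      l (phi A a) * n (phi B b) * f (A \<union> B) c)"
    by (rule tens3_eqD[OF coproduct_delta[OF A B AB x] lphi nphi character_lin_form[OF f AB_fin]])
  also have "\<dots> = (\<Sum>(a,b)\<leftarrow>D A B x. \<Sum>(a1,a2)\<leftarrow>d A a. \<Sum>(b1,b2)\<leftarrow>d B b.
      l (phi A a1) * n (phi B b1) * f (A \<union> B) (m A B a2 b2))"
    by (simp add: sum_list_concat_map split_def o_def)
  also have "\<dots> = (\<Sum>(a,b)\<leftarrow>D A B x. \<Sum>(a1,a2)\<leftarrow>d A a. \<Sum>(b1,b2)\<leftarrow>d B b.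
      (l (phi A a1) * f A a2) * (n (phi B b1) * f B b2))"
  proof (rule sum_list_prod_cong)
    fix a b assume "(a, b) \<in> set (D A B x)"
    then have a: "a \<in> sp P A" and b: "b \<in> sp P B" using coproduct_closed[OF A B AB x] by auto
    show "(\<Sum>(a1,a2)\<leftarrow>d A a. \<Sum>(b1,b2)\<leftarrow>d B b. l (phi A a1) * n (phi B b1) * f (A \<union> B) (m A B a2 b2)) =
        (\<Sum>(a1,a2)\<leftarrow>d A a. \<Sum>(b1,b2)\<leftarrow>d B b. (l (phi A a1) * f A a2) * (n (phi B b1) * f B b2))"
      by (intro sum_list_prod_cong2)
        (auto simp: character_mult[OF f A B AB] mult_ac
          dest!: subsetD[OF delta_closed[OF A a]] subsetD[OF delta_closed[OF B b]])
  qed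
  also have "\<dots> = (\<Sum>(a,b)\<leftarrow>D A B x. l (ract Q d phi f A a) * n (ract Q d phi f B b))"
    by (intro sum_list_prod_cong)
      (auto simp: sum_list_mult_sum_list lin_form_ract[OF phi_sp A _ l subset_refl]
        lin_form_ract[OF phi_sp B _ n subset_refl] dest!: subsetD[OF coproduct_closed[OF A B AB x]])
  finally show ?thesis unfolding pairing_def .
qed

lemma ract_coproduct:
  assumes TQ: "twisted_coalgebra Q DQ eQ" and phi: "coalg_mor P D e Q DQ eQ phi" and f: "character P m u f"
    and A: "finite A" and B: "finite B" and AB: "A \<inter> B = {}" and x: "x \<in> sp P (A \<union> B)"
  shows "tens_eq (scl Q) (sp Q A) (sp Q B) (DQ A B (ract Q d phi f (A \<union> B) x))
           (map (\<lambda>(a,b). (ract Q d phi f A a, ract Q d phi f B b)) (D A B x))"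
proof -
  have phi_sp: "species_mor P Q phi" using phi unfolding coalg_mor_def by simp
  have "finite (A \<union> B)" using A B by simp
  then show ?thesis
    unfolding tens_eq_def
    using twisted_coalgebra_closed[OF TQ A B AB ract_closed[OF phi_sp _ x]]
      coproduct_closed[OF A B AB x] ract_closed[OF phi_sp A] ract_closed[OF phi_sp B]
      coproduct_pairing_ract[OF TQ phi f A B AB x]
    by (auto simp: split_def o_def)
qed

lemma ract_counit:
  assumes TQ: "twisted_coalgebra Q DQ eQ" and phi: "coalg_mor P D e Q DQ eQ phi" and f: "character P m u f"
    and x: "x \<in> sp P {}"
  shows "eQ (ract Q d phi f {} x) = e x"
proof -
  have phi_sp: "species_mor P Q phi" and phi_e: "\<And>y. y \<in> sp P {} \<Longrightarrow> eQ (phi {} y) = e y"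
    using phi unfolding coalg_mor_def by simp_all
  have f_lin: "lin_map (scl P) (sp P {}) (*) (f {})"
    using character_lin_form[OF f finite.emptyI] by (simp add: lin_form_iff_lin_map)
  have "eQ (ract Q d phi f {} x) = (\<Sum>(a,b)\<leftarrow>d {} x. eQ (phi {} a) * f {} b)"
    by (rule lin_form_ract[OF phi_sp finite.emptyI x twisted_coalgebra_counit_lin_form[OF TQ] subset_refl])
  also have "\<dots> = (\<Sum>(a,b)\<leftarrow>d {} x. e a * f {} b)"
    by (intro sum_list_prod_cong) (auto simp: phi_e dest!: subsetD[OF delta_closed[OF finite.emptyI x]])
  also have "\<dots> = f {} (\<Sum>(a,b)\<leftarrow>d {} x. scl P (e a) b)"
    by (rule module.lin_map_sum_list_scale[OF species_module[OF species_P]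
          species_subspace[OF species_P finite.emptyI] f_lin, symmetric])
      (use delta_closed[OF finite.emptyI x] in blast)
  also have "\<dots> = e x"
    using character_lin_form[OF f finite.emptyI] unit_closed
    by (simp add: counit_delta[OF x] lin_form_def character_unit[OF f])
  finally show ?thesis .
qed

lemma coalg_mor_ract:
  assumes TQ: "twisted_coalgebra Q DQ eQ" and phi: "coalg_mor P D e Q DQ eQ phi" and f: "character P m u f"
  shows "coalg_mor P D e Q DQ eQ (ract Q d phi f)"
proof -
  have "species_mor P Q phi" using phi unfolding coalg_mor_def by simp
  then show ?thesis
    unfolding coalg_mor_def
    using species_mor_ract[OF _ f] ract_coproduct[OF TQ phi f] ract_counit[OF TQ phi f] by blast
qed

lemma bialg_mor_ract:
  assumes "twisted_bialgebra Q mQ uQ DQ eQ" and "bialg_mor P m u D e Q mQ uQ DQ eQ phi"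
    and "character P m u f"
  shows "bialg_mor P m u D e Q mQ uQ DQ eQ (ract Q d phi f)"
  using assms alg_mor_ract coalg_mor_ract unfolding twisted_bialgebra_def bialg_mor_def by simp

end

theorem proposition26:
  fixes P :: "('k::field, 'l, 'p::ab_group_add) spec"
    and m :: "'l set \<Rightarrow> 'l set \<Rightarrow> 'p \<Rightarrow> 'p \<Rightarrow> 'p" and u :: 'p
    and D :: "'l set \<Rightarrow> 'l set \<Rightarrow> 'p \<Rightarrow> ('p \<times> 'p) list" and e :: "'p \<Rightarrow> 'k"
    and d :: "'l set \<Rightarrow> 'p \<Rightarrow> ('p \<times> 'p) list" and e' :: "'l set \<Rightarrow> 'p \<Rightarrow> 'k"
    and Q :: "('k, 'l, 'q::ab_group_add) spec"
  assumes dtb: "double_twisted_bialgebra P m u D e d e'"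
    and Q: "species Q"
  shows
    "(\<forall>phi f. species_mor P Q phi \<and> character P m u f \<longrightarrow> species_mor P Q (ract Q d phi f))
   \<and> (\<forall>phi. species_mor P Q phi \<longrightarrow> mor_eq P (ract Q d phi e') phi)
   \<and> (\<forall>phi f g. species_mor P Q phi \<and> character P m u f \<and> character P m u g \<longrightarrow>
        mor_eq P (ract Q d (ract Q d phi f) g) (ract Q d phi (conv d f g)))
   \<and> (\<forall>mQ uQ. twisted_algebra Q mQ uQ \<longrightarrow>
        (\<forall>phi f. alg_mor P m u Q mQ uQ phi \<and> character P m u f \<longrightarrow>
           alg_mor P m u Q mQ uQ (ract Q d phi f)))
   \<and> (\<forall>DQ eQ. twisted_coalgebra Q DQ eQ \<longrightarrow>
        (\<forall>phi f. coalg_mor P D e Q DQ eQ phi \<and> character P m u f \<longrightarrow>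
           coalg_mor P D e Q DQ eQ (ract Q d phi f)))
   \<and> (\<forall>mQ uQ DQ eQ. twisted_bialgebra Q mQ uQ DQ eQ \<longrightarrow>
        (\<forall>phi f. bialg_mor P m u D e Q mQ uQ DQ eQ phi \<and> character P m u f \<longrightarrow>
           bialg_mor P m u D e Q mQ uQ DQ eQ (ract Q d phi f)))"
  using species_mor_ract[OF dtb Q] ract_delta_counit[OF dtb Q] ract_ract[OF dtb Q]
    alg_mor_ract[OF dtb Q] coalg_mor_ract[OF dtb Q] bialg_mor_ract[OF dtb Q]
  by blast

end
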